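(* Every countable crowded $T_1$ space of weight smaller than $\mathfrak{m}_c$ is $\omega$-resolvable, i.e., it can be partitioned into countably many pairwise disjoint dense subsets.
   Context: A space is crowded if it has no isolated points. $\mathfrak{m}_c$ is the least cardinal $\kappa$ such that Martin's Axiom MA$(\kappa)$ for countable posets fails. *)

theory Defs
  imports "HOL-Analysis.Analysis"
begin

definition crowded :: "'a topology \<Rightarrow> bool" where
  "crowded X \<longleftrightarrow> (\<forall>x \<in> topspace X. \<not> openin X {x})"

definition is_base :: "'a topology \<Rightarrow> 'a set set \<Rightarrow> bool" where
  "is_base X B \<longleftrightarrow> (\<forall>b \<in> B. openin X b) \<and>
     (\<forall>U. openin X U \<longrightarrow> (\<forall>x \<in> U. \<exists>b \<in> B. x \<in> b \<and> b \<subseteq> U))"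

text \<open>B is a base of minimal cardinality, i.e. its cardinality is the weight of X.\<close>
definition weight_base :: "'a topology \<Rightarrow> 'a set set \<Rightarrow> bool" where
  "weight_base X B \<longleftrightarrow> is_base X B \<and> (\<forall>B'. is_base X B' \<longrightarrow> ordLeq2 (card_of B) (card_of B'))"

text \<open>Forcing notions: a countable poset (P, le), where "le q p" means q is stronger than p.
  Countable posets are represented (up to isomorphism) on subsets of nat.\<close>
definition countable_poset :: "nat set \<Rightarrow> (nat \<Rightarrow> nat \<Rightarrow> bool) \<Rightarrow> bool" where
  "countable_poset P le \<longleftrightarrow> countable P \<and> P \<noteq> {} \<and>
     (\<forall>p \<in> P. le p p) \<and>
     (\<forall>p \<in> P. \<forall>q \<in> P. \<forall>r \<in> P. le p q \<and> le q r \<longrightarrow> le p r) \<and>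
     (\<forall>p \<in> P. \<forall>q \<in> P. le p q \<and> le q p \<longrightarrow> p = q)"

definition dense_in_poset :: "nat set \<Rightarrow> (nat \<Rightarrow> nat \<Rightarrow> bool) \<Rightarrow> nat set \<Rightarrow> bool" where
  "dense_in_poset P le D \<longleftrightarrow> D \<subseteq> P \<and> (\<forall>p \<in> P. \<exists>q \<in> D. le q p)"

definition filter_in_poset :: "nat set \<Rightarrow> (nat \<Rightarrow> nat \<Rightarrow> bool) \<Rightarrow> nat set \<Rightarrow> bool" where
  "filter_in_poset P le G \<longleftrightarrow> G \<subseteq> P \<and> G \<noteq> {} \<and>
     (\<forall>p \<in> G. \<forall>q \<in> P. le p q \<longrightarrow> q \<in> G) \<and>
     (\<forall>p \<in> G. \<forall>q \<in> G. \<exists>r \<in> G. le r p \<and> le r q)"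

text \<open>MA(|K|) for countable posets: for every countable poset and every family of
  dense sets indexed by K there is a filter meeting all of them.\<close>
definition MA_countable :: "'i set \<Rightarrow> bool" where
  "MA_countable K \<longleftrightarrow> (\<forall>P le (D :: 'i \<Rightarrow> nat set). countable_poset P le \<longrightarrow>
      (\<forall>k \<in> K. dense_in_poset P le (D k)) \<longrightarrow>
      (\<exists>G. filter_in_poset P le G \<and> (\<forall>k \<in> K. G \<inter> D k \<noteq> {})))"

text \<open>weight(X) < m_c, where m_c is the least cardinal kappa such that MA(kappa) for
  countable posets fails: i.e. MA(kappa) holds for every cardinal kappa \<le> weight(X).\<close>
definition weight_less_mc :: "'a topology \<Rightarrow> bool" where
  "weight_less_mc X \<longleftrightarrow> (\<exists>B. weight_base X B \<and>
      (\<forall>K :: 'a set set set. ordLeq2 (card_of K) (card_of B) \<longrightarrow> MA_countable K))"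

definition omega_resolvable :: "'a topology \<Rightarrow> bool" where
  "omega_resolvable X \<longleftrightarrow> (\<exists>D :: nat \<Rightarrow> 'a set.
      (\<forall>n. D n \<subseteq> topspace X) \<and> (\<Union>n. D n) = topspace X \<and>
      (\<forall>m n. m \<noteq> n \<longrightarrow> D m \<inter> D n = {}) \<and>
      (\<forall>n. X closure_of (D n) = topspace X))"

end

theory Submission
  imports Defs
begin

(* Force with the countable poset of finite partial colourings of the points by natural numbers,
   ordered by extension. For a nonempty basic open set b and a colour n, the conditions colouring
   some point of b with n are dense, because open sets of a crowded T1 space are infinite while
   conditions are finite. Since the base B is infinite there are only |B x nat| = |B| of these dense
   sets, so MA for countable posets at the weight yields a filter meeting all of them. The union of
   this filter is a colouring in which every colour class meets every nonempty basic open set. *)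

lemma crowded_t1_openin_infinite:
  assumes "t1_space X" "crowded X" "openin X U" "U \<noteq> {}"
  shows "infinite U"
proof
  assume "finite U"
  obtain x where x: "x \<in> U" using assms(4) by blast
  have U: "U \<subseteq> topspace X" using assms(3) openin_subset by blast
  have "closedin X (U - {x})"
    using assms(1) \<open>finite U\<close> U unfolding t1_space_closedin_finite by auto
  then have "openin X (U - (U - {x}))" using assms(3) by (simp add: openin_diff)
  moreover have "U - (U - {x}) = {x}" using x by auto
  ultimately show False using assms(2) x U unfolding crowded_def by auto
qed

lemma crowded_t1_base_infinite:
  assumes "t1_space X" "crowded X" "is_base X B" "topspace X \<noteq> {}"
  shows "infinite B"
proof
  assume "finite B"
  obtain x where x: "x \<in> topspace X" using assms(4) by blast
  define V where "V = topspace X \<inter> \<Inter>{b \<in> B. x \<in> b}"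
  have "openin X V"
    using \<open>finite B\<close> assms(3) unfolding V_def is_base_def
    by (intro openin_Int_Inter) auto
  moreover have "V = {x}"
  proof (rule ccontr)
    assume "V \<noteq> {x}"
    moreover have "x \<in> V" using x by (auto simp: V_def)
    ultimately obtain y where y: "y \<in> V" "y \<noteq> x" by blast
    then have "y \<in> topspace X" by (simp add: V_def)
    then obtain U where "openin X U" "x \<in> U" "y \<notin> U"
      using assms(1) x \<open>y \<noteq> x\<close> unfolding t1_space_def by metis
    then obtain b where "b \<in> B" "x \<in> b" "b \<subseteq> U"
      using assms(3) unfolding is_base_def by blast
    then show False using y \<open>y \<notin> U\<close> by (auto simp: V_def)
  qed
  ultimately show False using assms(2) x unfolding crowded_def by auto
qed

lemma dense_if_intersects_base:
  assumes "is_base X B" and "\<And>b. b \<in> B \<Longrightarrow> b \<noteq> {} \<Longrightarrow> S \<inter> b \<noteq> {}"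
  shows "X closure_of S = topspace X"
  unfolding dense_intersects_open
proof (intro allI impI)
  fix U assume "openin X U \<and> U \<noteq> {}"
  then obtain x b where "b \<in> B" "x \<in> b" "b \<subseteq> U"
    using assms(1) unfolding is_base_def by blast
  then show "S \<inter> U \<noteq> {}" using assms(2) by blast
qed

lemma omega_resolvable_if_dense_colour_classes:
  fixes col :: "'a \<Rightarrow> nat"
  assumes "\<And>n. X closure_of {x \<in> topspace X. col x = n} = topspace X"
  shows "omega_resolvable X"
  unfolding omega_resolvable_def
  by (rule exI[of _ "\<lambda>n. {x \<in> topspace X. col x = n}"]) (use assms in auto)

definition map_Union :: "('a \<rightharpoonup> 'b) set \<Rightarrow> 'a \<rightharpoonup> 'b" where
  "map_Union G x = (if \<exists>c\<in>G. x \<in> dom c then (SOME c. c \<in> G \<and> x \<in> dom c) x else None)"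

lemma map_le_map_Union:
  assumes directed: "\<forall>c\<in>G. \<forall>d\<in>G. \<exists>e\<in>G. c \<subseteq>\<^sub>m e \<and> d \<subseteq>\<^sub>m e" and "c \<in> G"
  shows "c \<subseteq>\<^sub>m map_Union G"
  unfolding map_le_def
proof
  fix x assume "x \<in> dom c"
  define d where "d = (SOME d. d \<in> G \<and> x \<in> dom d)"
  have "d \<in> G \<and> x \<in> dom d"
    unfolding d_def by (rule someI[of _ c]) (use \<open>c \<in> G\<close> \<open>x \<in> dom c\<close> in blast)
  then obtain e where "e \<in> G" "c \<subseteq>\<^sub>m e" "d \<subseteq>\<^sub>m e"
    using directed \<open>c \<in> G\<close> by blast
  then have "c x = d x"
    using \<open>x \<in> dom c\<close> \<open>d \<in> G \<and> x \<in> dom d\<close> unfolding map_le_def by metis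
  then show "c x = map_Union G x"
    using \<open>c \<in> G\<close> \<open>x \<in> dom c\<close> by (auto simp: map_Union_def d_def)
qed

lemma finite_map_extend_inside:
  assumes "infinite b" "b \<subseteq> T" "finite (dom c)" "dom c \<subseteq> T"
  shows "\<exists>d. finite (dom d) \<and> dom d \<subseteq> T \<and> c \<subseteq>\<^sub>m d \<and> (\<exists>x\<in>b. d x = Some y)"
proof -
  have "b - dom c \<noteq> {}"
    using assms(1,3) Diff_infinite_finite infinite_imp_nonempty by blast
  then obtain x where "x \<in> b" "x \<notin> dom c" by blast
  then show ?thesis
    using assms(2-4) by (intro exI[of _ "c(x \<mapsto> y)"]) (auto simp: map_le_def)
qed

lemma countable_finite_maps:
  assumes "countable T"
  shows "countable {c :: 'a \<rightharpoonup> 'b::countable. finite (dom c) \<and> dom c \<subseteq> T}"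
proof (rule countable_image_inj_on)
  have "finite (Map.graph c) \<and> Map.graph c \<subseteq> T \<times> UNIV" if "finite (dom c)" "dom c \<subseteq> T"
    for c :: "'a \<rightharpoonup> 'b"
    using that graph_eq_to_snd_dom[of c] by auto
  then have "Map.graph ` {c :: 'a \<rightharpoonup> 'b. finite (dom c) \<and> dom c \<subseteq> T}
      \<subseteq> {A. finite A \<and> A \<subseteq> T \<times> UNIV}"
    by blast
  then show "countable (Map.graph ` {c :: 'a \<rightharpoonup> 'b. finite (dom c) \<and> dom c \<subseteq> T})"
    by (rule countable_subset) (use assms in \<open>simp add: countable_Collect_finite_subset\<close>)
  show "inj_on Map.graph {c :: 'a \<rightharpoonup> 'b. finite (dom c) \<and> dom c \<subseteq> T}"
  proof (rule inj_onI)
    fix c d :: "'a \<rightharpoonup> 'b" assume "Map.graph c = Map.graph d"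
    then show "c = d"
      by (metis in_graphD in_graphI not_None_eq ext)
  qed
qed

lemma MA_countable_ordLeq:
  assumes "ordLeq2 (card_of I) (card_of K)" and "MA_countable K"
  shows "MA_countable I"
  unfolding MA_countable_def
proof (intro allI impI)
  fix P le and D :: "_ \<Rightarrow> nat set"
  assume poset: "countable_poset P le" and dense: "\<forall>i\<in>I. dense_in_poset P le (D i)"
  obtain g where g: "inj_on g I" "g ` I \<subseteq> K"
    using assms(1) card_of_ordLeq[of I K] by auto
  define D' where "D' k = (if k \<in> g ` I then D (inv_into I g k) else P)" for k
  have "dense_in_poset P le P"
    using poset unfolding countable_poset_def dense_in_poset_def by blast
  then have "\<forall>k\<in>K. dense_in_poset P le (D' k)"
    using dense unfolding D'_def by (simp add: inv_into_into)
  then obtain G where G: "filter_in_poset P le G" "\<forall>k\<in>K. G \<inter> D' k \<noteq> {}"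
    using assms(2) poset unfolding MA_countable_def by (elim allE impE) auto
  have "D' (g i) = D i" if "i \<in> I" for i
    using g(1) that by (simp add: D'_def)
  then have "\<forall>i\<in>I. G \<inter> D i \<noteq> {}"
    using G(2) g(2) by (metis image_subset_iff)
  with G(1) show "\<exists>G. filter_in_poset P le G \<and> (\<forall>i\<in>I. G \<inter> D i \<noteq> {})"
    by blast
qed

lemma countable_poset_to_nat_on:
  fixes leq :: "'q \<Rightarrow> 'q \<Rightarrow> bool"
  assumes "countable Q" "Q \<noteq> {}"
    and refl: "\<forall>p\<in>Q. leq p p"
    and trans: "\<forall>p\<in>Q. \<forall>q\<in>Q. \<forall>r\<in>Q. leq p q \<and> leq q r \<longrightarrow> leq p r"
    and antisym: "\<forall>p\<in>Q. \<forall>q\<in>Q. leq p q \<and> leq q p \<longrightarrow> p = q"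
  shows "countable_poset (to_nat_on Q ` Q)
           (\<lambda>m n. leq (from_nat_into Q m) (from_nat_into Q n))"
    (is "countable_poset ?P ?le")
  unfolding countable_poset_def
proof (intro conjI ballI impI)
  have hP: "from_nat_into Q m \<in> Q" "to_nat_on Q (from_nat_into Q m) = m" if "m \<in> ?P" for m
    using that \<open>countable Q\<close> by auto
  show "countable ?P" "?P \<noteq> {}"
    using assms(1,2) by simp_all
  show "?le p p" if "p \<in> ?P" for p
    using that hP refl by simp
  show "?le p r" if "p \<in> ?P" "q \<in> ?P" "r \<in> ?P" "?le p q \<and> ?le q r" for p q r
    using that hP trans by blast
  show "p = q" if p: "p \<in> ?P" and q: "q \<in> ?P" and "?le p q \<and> ?le q p" for p q
  proof -
    have "from_nat_into Q p = from_nat_into Q q"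
      using that hP(1)[OF p] hP(1)[OF q] antisym by simp
    then show "p = q" by (metis hP(2) p q)
  qed
qed

lemma MA_countable_transfer:
  fixes leq :: "'q \<Rightarrow> 'q \<Rightarrow> bool"
  assumes MA: "MA_countable I"
    and "countable Q" "Q \<noteq> {}"
    and "\<forall>p\<in>Q. leq p p"
    and "\<forall>p\<in>Q. \<forall>q\<in>Q. \<forall>r\<in>Q. leq p q \<and> leq q r \<longrightarrow> leq p r"
    and "\<forall>p\<in>Q. \<forall>q\<in>Q. leq p q \<and> leq q p \<longrightarrow> p = q"
    and dense: "\<forall>i\<in>I. E i \<subseteq> Q \<and> (\<forall>p\<in>Q. \<exists>q\<in>E i. leq q p)"
  obtains G where "G \<subseteq> Q" "G \<noteq> {}" "\<forall>p\<in>G. \<forall>q\<in>Q. leq p q \<longrightarrow> q \<in> G"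
    "\<forall>p\<in>G. \<forall>q\<in>G. \<exists>r\<in>G. leq r p \<and> leq r q" "\<forall>i\<in>I. G \<inter> E i \<noteq> {}"
proof -
  define f where "f = to_nat_on Q"
  define h where "h = from_nat_into Q"
  define P where "P = f ` Q"
  define le where "le = (\<lambda>m n. leq (h m) (h n))"
  have hf: "h (f q) = q" if "q \<in> Q" for q
    using \<open>countable Q\<close> that by (simp add: f_def h_def)
  have hP: "h m \<in> Q" "f (h m) = m" if "m \<in> P" for m
    using that hf by (auto simp: P_def)
  have "countable_poset P le"
    unfolding P_def le_def f_def h_def using assms(2-6) by (rule countable_poset_to_nat_on)
  moreover have "dense_in_poset P le (f ` E i)" if "i \<in> I" for i
    unfolding dense_in_poset_def
  proof (intro conjI ballI)
    have Ei: "E i \<subseteq> Q" "\<forall>p\<in>Q. \<exists>q\<in>E i. leq q p" using dense that by auto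
    then show "f ` E i \<subseteq> P" by (auto simp: P_def)
    fix p assume "p \<in> P"
    then obtain q where q: "q \<in> E i" "leq q (h p)" using Ei(2) hP(1) by blast
    from q(1) Ei(1) have "h (f q) = q" using hf by blast
    with q(2) have "le (f q) p" by (simp add: le_def)
    with q(1) show "\<exists>q\<in>f ` E i. le q p" by blast
  qed
  ultimately obtain G' where G': "filter_in_poset P le G'" "\<forall>i\<in>I. G' \<inter> f ` E i \<noteq> {}"
    using MA unfolding MA_countable_def by (elim allE impE) auto
  then have G'P: "G' \<subseteq> P" by (simp add: filter_in_poset_def)
  define G where "G = {q \<in> Q. f q \<in> G'}"
  have hG: "h m \<in> G" if "m \<in> G'" for m
    using that G'P hP by (auto simp: G_def)
  show thesis
  proof
    show "G \<subseteq> Q" by (simp add: G_def)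
    show "G \<noteq> {}"
      using G'(1) hG unfolding filter_in_poset_def by blast
    show "\<forall>p\<in>G. \<forall>q\<in>Q. leq p q \<longrightarrow> q \<in> G"
    proof (intro ballI impI)
      fix p q assume "p \<in> G" "q \<in> Q" "leq p q"
      then have "f p \<in> G'" "f q \<in> P" "le (f p) (f q)"
        by (auto simp: G_def P_def le_def hf)
      then show "q \<in> G"
        using G'(1) \<open>q \<in> Q\<close> unfolding filter_in_poset_def G_def by blast
    qed
    show "\<forall>p\<in>G. \<forall>q\<in>G. \<exists>r\<in>G. leq r p \<and> leq r q"
    proof (intro ballI)
      fix p q assume "p \<in> G" "q \<in> G"
      then have "f p \<in> G'" "f q \<in> G'" "h (f p) = p" "h (f q) = q"
        by (simp_all add: G_def hf)
      then obtain r where "r \<in> G'" "le r (f p)" "le r (f q)"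
        using G'(1) unfolding filter_in_poset_def by blast
      then show "\<exists>r\<in>G. leq r p \<and> leq r q"
        using hG \<open>h (f p) = p\<close> \<open>h (f q) = q\<close> by (auto simp: le_def)
    qed
    show "\<forall>i\<in>I. G \<inter> E i \<noteq> {}"
    proof
      fix i assume "i \<in> I"
      then obtain q where "q \<in> E i" "f q \<in> G'" using G'(2) by blast
      moreover have "q \<in> Q" using dense \<open>i \<in> I\<close> \<open>q \<in> E i\<close> by blast
      ultimately show "G \<inter> E i \<noteq> {}" by (auto simp: G_def)
    qed
  qed
qed

lemma card_of_Times_nat_ordLeq:
  assumes "infinite B"
  shows "ordLeq2 (card_of (B \<times> (UNIV :: nat set))) (card_of B)"
  using card_of_Times_infinite[OF assms, of "UNIV :: nat set"] assms
  by (simp add: infinite_iff_card_of_nat ordIso_imp_ordLeq)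

lemma crowded_t1_dense_colouring:
  fixes X :: "'a topology"
  assumes "countable (topspace X)" "t1_space X" "crowded X" "is_base X B"
    and MA: "MA_countable ((B - {{}}) \<times> (UNIV :: nat set))"
  obtains col :: "'a \<Rightarrow> nat"
  where "\<And>n. X closure_of {x \<in> topspace X. col x = n} = topspace X"
proof -
  define Q where "Q = {c :: 'a \<rightharpoonup> nat. finite (dom c) \<and> dom c \<subseteq> topspace X}"
  define E where "E = (\<lambda>(b, n). {c \<in> Q. \<exists>x\<in>b. c x = Some n})"
  have "countable Q"
    unfolding Q_def using assms(1) by (rule countable_finite_maps)
  have "Q \<noteq> {}" by (auto simp: Q_def intro!: exI[of _ Map.empty])
  have order: "\<forall>p\<in>Q. p \<subseteq>\<^sub>m p" "\<forall>p\<in>Q. \<forall>q\<in>Q. \<forall>r\<in>Q. q \<subseteq>\<^sub>m p \<and> r \<subseteq>\<^sub>m q \<longrightarrow> r \<subseteq>\<^sub>m p"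
    "\<forall>p\<in>Q. \<forall>q\<in>Q. q \<subseteq>\<^sub>m p \<and> p \<subseteq>\<^sub>m q \<longrightarrow> p = q"
    by (auto intro: map_le_trans map_le_antisym)
  have dense: "\<forall>i\<in>(B - {{}}) \<times> (UNIV :: nat set). E i \<subseteq> Q \<and> (\<forall>c\<in>Q. \<exists>d\<in>E i. c \<subseteq>\<^sub>m d)"
  proof (intro ballI conjI)
    fix i assume "i \<in> (B - {{}}) \<times> (UNIV :: nat set)"
    then obtain b n where i: "i = (b, n)" "b \<in> B" "b \<noteq> {}" by auto
    show "E i \<subseteq> Q" by (auto simp: E_def i)
    fix c assume c: "c \<in> Q"
    have "openin X b" using assms(4) i(2) unfolding is_base_def by blast
    then have "infinite b" "b \<subseteq> topspace X"
      using crowded_t1_openin_infinite[OF assms(2,3)] i(3) openin_subset by auto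
    then obtain d where "finite (dom d)" "dom d \<subseteq> topspace X" "c \<subseteq>\<^sub>m d" "\<exists>x\<in>b. d x = Some n"
      using finite_map_extend_inside[of b "topspace X" c n] c by (auto simp: Q_def)
    then show "\<exists>d\<in>E i. c \<subseteq>\<^sub>m d" by (auto simp: E_def Q_def i)
  qed
  obtain G where G: "G \<subseteq> Q" "\<forall>c\<in>G. \<forall>d\<in>G. \<exists>e\<in>G. c \<subseteq>\<^sub>m e \<and> d \<subseteq>\<^sub>m e"
    "\<forall>i\<in>(B - {{}}) \<times> (UNIV :: nat set). G \<inter> E i \<noteq> {}"
    by (rule MA_countable_transfer[where leq = "\<lambda>c d. d \<subseteq>\<^sub>m c",
        OF MA \<open>countable Q\<close> \<open>Q \<noteq> {}\<close> order dense]) (rule that)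
  define col where "col x = (case map_Union G x of None \<Rightarrow> 0 | Some n \<Rightarrow> n)" for x
  show thesis
  proof (rule that, rule dense_if_intersects_base[OF assms(4)])
    fix n b assume "b \<in> B" "b \<noteq> {}"
    then obtain c where "c \<in> G" "c \<in> E (b, n)" using G(3) by blast
    then obtain y where y: "y \<in> b" "c y = Some n" "dom c \<subseteq> topspace X"
      using G(1) by (auto simp: E_def Q_def)
    have "map_Union G y = Some n"
      using map_le_map_Union[OF G(2) \<open>c \<in> G\<close>] y(2) unfolding map_le_def by force
    moreover have "y \<in> topspace X" using y by blast
    ultimately show "{x \<in> topspace X. col x = n} \<inter> b \<noteq> {}"
      using y(1) by (auto simp: col_def)
  qed
qed

theorem mainTheorem3:
  fixes X :: "'a topology"
  assumes "countable (topspace X)"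
    and "t1_space X"
    and "crowded X"
    and "weight_less_mc X"
  shows "omega_resolvable X"
proof (cases "topspace X = {}")
  case True
  then show ?thesis
    by (intro omega_resolvable_if_dense_colour_classes[where col = "\<lambda>_. 0"]) simp
next
  case False
  obtain B where "weight_base X B"
    and MA: "\<forall>K :: 'a set set set. ordLeq2 (card_of K) (card_of B) \<longrightarrow> MA_countable K"
    using assms(4) unfolding weight_less_mc_def by blast
  then have base: "is_base X B" by (simp add: weight_base_def)
  define I where "I = (B - {{}}) \<times> (UNIV :: nat set)"
  \<comment> \<open>\<open>weight_less_mc\<close> grants MA only for index sets of type \<open>'a set set set\<close>\<close>
  define K :: "'a set set set" where "K = (\<lambda>b. {b}) ` B"
  have "ordLeq2 (card_of I) (card_of (B \<times> (UNIV :: nat set)))"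
    unfolding I_def by (rule card_of_mono1) auto
  moreover have "ordLeq2 (card_of (B \<times> (UNIV :: nat set))) (card_of B)"
    using crowded_t1_base_infinite[OF assms(2,3) base False] by (rule card_of_Times_nat_ordLeq)
  moreover have "ordLeq2 (card_of B) (card_of K)"
    unfolding K_def card_of_ordLeq[symmetric] by (intro exI[of _ "\<lambda>b. {b}"]) (auto simp: inj_on_def)
  ultimately have "ordLeq2 (card_of I) (card_of K)"
    by (blast intro: ordLeq_transitive)
  moreover have "MA_countable K"
    using MA card_of_image unfolding K_def by blast
  ultimately have "MA_countable I"
    by (rule MA_countable_ordLeq)
  then show ?thesis
    unfolding I_def
    by (metis crowded_t1_dense_colouring[OF assms(1-3) base] omega_resolvable_if_dense_colour_classes)
qed

end
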